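(* Let $k\ge 1$ and let $\{v_1,\ldots,v_k\}$ be a set of $k$ distinct integers that does not have the LR property. Then $\operatorname{lcm}(2,3,\ldots,k+1)$ divides $\prod_{i=1}^{k} v_i$.
   Context: For a real number $x$, $\|x\|$ denotes the distance from $x$ to the nearest integer. A finite set $S$ of $m$ integers has the LR (lonely runner) property if there exists a real $t$ such that $\|tv\|\ge \frac{1}{m+1}$ for all $v\in S$. *)

theory Defs
  imports Complex_Main
begin

definition dist_nearest_int :: "real \<Rightarrow> real" where
  "dist_nearest_int x = (INF n\<in>(\<int>::real set). \<bar>x - n\<bar>)"

definition LR_property :: "int set \<Rightarrow> bool" where
  "LR_property S \<longleftrightarrow>
     (\<exists>t::real. \<forall>v\<in>S. dist_nearest_int (t * of_int v) \<ge> 1 / (real (card S) + 1))"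

end

theory Submission
  imports Defs
begin

text \<open>If no element of \<open>S\<close> is a multiple of \<open>q \<le> card S + 1\<close>, then every runner is at
  distance at least \<open>1/q\<close> from the origin at time \<open>t = 1/q\<close>. So for a set without the LR
  property each \<open>q \<in> {2..k+1}\<close> divides one of its elements, hence their product, and therefore
  so does the least common multiple of these \<open>q\<close>.\<close>

lemma dist_nearest_int_of_int_divide_ge:
  fixes v q :: int
  assumes "q > 0" and "\<not> q dvd v"
  shows "1 / of_int q \<le> dist_nearest_int (of_int v / of_int q)"
  unfolding dist_nearest_int_def
proof (rule cINF_greatest)
  show "(\<int>::real set) \<noteq> {}" by auto
next
  fix n :: real assume "n \<in> \<int>"
  then obtain m where n: "n = of_int m" by (auto elim: Ints_cases)
  have "v \<noteq> q * m" using assms(2) by auto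
  then have "1 \<le> \<bar>v - q * m\<bar>" by linarith
  then have "1 \<le> \<bar>of_int v - of_int q * of_int m :: real\<bar>"
    by (metis of_int_1_le_iff of_int_abs of_int_diff of_int_mult)
  moreover have "\<bar>of_int v / of_int q - n\<bar> = \<bar>of_int v - of_int q * of_int m\<bar> / of_int q"
    using assms(1) by (simp add: n field_simps)
  ultimately show "1 / of_int q \<le> \<bar>of_int v / of_int q - n\<bar>"
    using assms(1) by (simp add: divide_right_mono)
qed

lemma LR_property_if_no_multiple:
  fixes S :: "int set" and q :: int
  assumes "0 < q" and "q \<le> int (card S) + 1" and "\<forall>v\<in>S. \<not> q dvd v"
  shows "LR_property S"
  unfolding LR_property_def
proof (intro exI ballI)
  fix v assume "v \<in> S"
  have "real_of_int q \<le> real (card S) + 1"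
    using assms(2) by linarith
  then have "1 / (real (card S) + 1) \<le> 1 / of_int q"
    using assms(1) by (intro divide_left_mono) auto
  also have "\<dots> \<le> dist_nearest_int (of_int v / of_int q)"
    using assms \<open>v \<in> S\<close> by (intro dist_nearest_int_of_int_divide_ge) auto
  finally show "1 / (real (card S) + 1) \<le> dist_nearest_int (1 / of_int q * of_int v)"
    by simp
qed

theorem lemma3:
  fixes S :: "int set" and k :: nat
  assumes "finite S" and "card S = k" and "k \<ge> 1"
    and "\<not> LR_property S"
  shows "int (Lcm {2..k+1}) dvd (\<Prod>v\<in>S. v)"
proof -
  have "m dvd nat \<bar>\<Prod>v\<in>S. v\<bar>" if m: "m \<in> {2..k+1}" for m
  proof -
    have "0 < int m" and "int m \<le> int (card S) + 1"
      using m assms(2) by auto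
    then obtain v where "v \<in> S" and "int m dvd v"
      using LR_property_if_no_multiple[of "int m" S] assms(4) by blast
    then have "int m dvd (\<Prod>v\<in>S. v)"
      using assms(1) by (meson dvd_prodI dvd_trans)
    then show ?thesis by simp
  qed
  then have "Lcm {2..k+1} dvd nat \<bar>\<Prod>v\<in>S. v\<bar>" by (intro Lcm_least)
  then show ?thesis by simp
qed

end
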